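(* Let $X=X(G,C)$ be an oriented Cayley graph for a finite group $G$ of order $n>2$, with skew-symmetric adjacency matrix $A$. If there is a time $t$ such that all entries of $U(t)=\exp(-tA)$ have the same modulus (uniform mixing), then $n$ is an even perfect square.
   Context: For a finite group $G$ (multiplicative), $A_g$ is the permutation matrix with $(A_g)_{a,b}=1$ iff $ba^{-1}=g$, and $A_C=\sum_{g\in C}A_g$. An oriented Cayley graph $X(G,C)$ has $1\notin C$ and $C\cap C^{-1}=\emptyset$; its skew-symmetric adjacency matrix is $A=A_C-A_C^T$, with entry $1$ for arcs $a\to b$ ($ba^{-1}\in C$), $-1$ for reverse arcs, and $0$ otherwise. The continuous quantum walk on $X$ has transition matrix $U(t)=\exp(it(iA))=\exp(-tA)$. The group $G$ need not be abelian and $C$ need not be a union of conjugacy classes. *)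

theory Defs
  imports "HOL-Analysis.Analysis" "HOL-Algebra.Group"
begin

text \<open>Square matrices indexed by a finite set S (here the carrier of the group),
represented as functions 'a \<Rightarrow> 'a \<Rightarrow> real; entries outside S are irrelevant.\<close>

definition perm_mat :: "('a, 'b) monoid_scheme \<Rightarrow> 'a \<Rightarrow> 'a \<Rightarrow> 'a \<Rightarrow> real" where
  "perm_mat G g = (\<lambda>a b. if b \<otimes>\<^bsub>G\<^esub> inv\<^bsub>G\<^esub> a = g then 1 else 0)"

definition conn_mat :: "('a, 'b) monoid_scheme \<Rightarrow> 'a set \<Rightarrow> 'a \<Rightarrow> 'a \<Rightarrow> real" where
  "conn_mat G C = (\<lambda>a b. \<Sum>g\<in>C. perm_mat G g a b)"

definition skew_adj :: "('a, 'b) monoid_scheme \<Rightarrow> 'a set \<Rightarrow> 'a \<Rightarrow> 'a \<Rightarrow> real" where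
  "skew_adj G C = (\<lambda>a b. conn_mat G C a b - conn_mat G C b a)"

definition oriented_cayley :: "('a, 'b) monoid_scheme \<Rightarrow> 'a set \<Rightarrow> bool" where
  "oriented_cayley G C \<longleftrightarrow> C \<subseteq> carrier G \<and> \<one>\<^bsub>G\<^esub> \<notin> C \<and> (\<forall>c\<in>C. inv\<^bsub>G\<^esub> c \<notin> C)"

definition mat_mult :: "'a set \<Rightarrow> ('a \<Rightarrow> 'a \<Rightarrow> real) \<Rightarrow> ('a \<Rightarrow> 'a \<Rightarrow> real) \<Rightarrow> 'a \<Rightarrow> 'a \<Rightarrow> real" where
  "mat_mult S M N = (\<lambda>a b. \<Sum>c\<in>S. M a c * N c b)"

fun mat_pow :: "'a set \<Rightarrow> ('a \<Rightarrow> 'a \<Rightarrow> real) \<Rightarrow> nat \<Rightarrow> 'a \<Rightarrow> 'a \<Rightarrow> real" where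
  "mat_pow S M 0 = (\<lambda>a b. if a = b then 1 else 0)"
| "mat_pow S M (Suc k) = mat_mult S (mat_pow S M k) M"

definition mat_exp :: "'a set \<Rightarrow> ('a \<Rightarrow> 'a \<Rightarrow> real) \<Rightarrow> 'a \<Rightarrow> 'a \<Rightarrow> real" where
  "mat_exp S M = (\<lambda>a b. \<Sum>k. mat_pow S M k a b / fact k)"

definition transition :: "('a, 'b) monoid_scheme \<Rightarrow> 'a set \<Rightarrow> real \<Rightarrow> 'a \<Rightarrow> 'a \<Rightarrow> real" where
  "transition G C t = mat_exp (carrier G) (\<lambda>a b. - t * skew_adj G C a b)"

end

theory Submission
  imports Defs
begin

text \<open>Since \<open>A\<close> is skew-symmetric, \<open>U = exp(-tA)\<close> is orthogonal, and since every vertex has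
  as many out-neighbours as in-neighbours, \<open>A\<close> has zero row sums, so every row of \<open>U\<close> sums to 1.
  If all entries of \<open>U\<close> have modulus \<open>c\<close>, then \<open>U = c H\<close> with \<open>H\<close> a \<open>\<plusminus>1\<close> matrix, so
  \<open>n c\<^sup>2 = 1\<close> (row norm) and \<open>c z = 1\<close> with \<open>z\<close> an integer row sum of \<open>H\<close>; hence \<open>n = z\<^sup>2\<close>.
  Two distinct rows of \<open>H\<close> are orthogonal \<open>\<plusminus>1\<close> vectors, which forces \<open>n\<close> to be even.\<close>

lemma mat_pow_add:
  assumes "finite S" "a \<in> S" "b \<in> S"
  shows "mat_pow S M (i + j) a b = (\<Sum>c\<in>S. mat_pow S M i a c * mat_pow S M j c b)"
  using assms(3)
proof (induction j arbitrary: b)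
  case 0
  have "(\<Sum>c\<in>S. mat_pow S M i a c * mat_pow S M 0 c b) = (\<Sum>c\<in>S. if c = b then mat_pow S M i a c else 0)"
    by (intro sum.cong) auto
  also have "\<dots> = mat_pow S M i a b" using assms(1) 0 by simp
  finally show ?case by simp
next
  case (Suc j)
  have "mat_pow S M (i + Suc j) a b = (\<Sum>d\<in>S. mat_pow S M (i+j) a d * M d b)"
    by (simp add: mat_mult_def)
  also have "\<dots> = (\<Sum>d\<in>S. \<Sum>c\<in>S. mat_pow S M i a c * mat_pow S M j c d * M d b)"
    using Suc.IH by (simp add: sum_distrib_right)
  also have "\<dots> = (\<Sum>c\<in>S. mat_pow S M i a c * (\<Sum>d\<in>S. mat_pow S M j c d * M d b))"
    by (subst sum.swap) (simp add: sum_distrib_left mult.assoc)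
  finally show ?case by (simp add: mat_mult_def)
qed

lemma mat_pow_one:
  assumes "finite S" "a \<in> S"
  shows "mat_pow S M 1 a b = M a b"
proof -
  have "mat_pow S M 1 a b = (\<Sum>c\<in>S. if a = c then M c b else 0)"
    unfolding One_nat_def mat_pow.simps mat_mult_def by (intro sum.cong) auto
  also have "\<dots> = M a b" using assms by simp
  finally show ?thesis .
qed

lemma mat_pow_skew_transpose:
  assumes "finite S" "\<And>x y. M y x = - M x y" "a \<in> S" "b \<in> S"
  shows "mat_pow S M j a b = (-1)^j * mat_pow S M j b a"
  using assms(3,4)
proof (induction j arbitrary: a b)
  case 0
  then show ?case by auto
next
  case (Suc j)
  have "mat_pow S M (Suc j) a b = (\<Sum>d\<in>S. mat_pow S M j a d * M d b)"
    by (simp add: mat_mult_def)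
  also have "\<dots> = (-1)^Suc j * (\<Sum>d\<in>S. mat_pow S M 1 b d * mat_pow S M j d a)"
    unfolding sum_distrib_left
  proof (intro sum.cong refl)
    fix d assume "d \<in> S"
    then show "mat_pow S M j a d * M d b = (-1)^Suc j * (mat_pow S M 1 b d * mat_pow S M j d a)"
      using Suc.IH[OF Suc.prems(1)] mat_pow_one[OF assms(1) Suc.prems(2)] assms(2)[of d b] by simp
  qed
  also have "(\<Sum>d\<in>S. mat_pow S M 1 b d * mat_pow S M j d a) = mat_pow S M (Suc j) b a"
    using mat_pow_add[OF assms(1) Suc.prems(2,1), of M 1 j] by simp
  finally show ?case .
qed

lemma skew_mat_pow_row_products:
  assumes "finite S" "\<And>x y. M y x = - M x y" "a \<in> S" "b \<in> S"
  shows "(\<Sum>c\<in>S. mat_pow S M i a c * mat_pow S M j b c) = (-1)^j * mat_pow S M (i + j) a b"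
proof -
  have "(\<Sum>c\<in>S. mat_pow S M i a c * mat_pow S M j b c)
      = (\<Sum>c\<in>S. (-1)^j * (mat_pow S M i a c * mat_pow S M j c b))"
    using mat_pow_skew_transpose[OF assms(1,2) assms(4)] by (intro sum.cong) auto
  then show ?thesis
    by (simp add: sum_distrib_left[symmetric] mat_pow_add[OF assms(1,3,4)])
qed

lemma mat_pow_abs_le:
  assumes "finite S" "\<And>x y. \<bar>M x y\<bar> \<le> B"
  shows "\<bar>mat_pow S M k a b\<bar> \<le> (real (card S) * B)^k"
proof (induction k arbitrary: b)
  case 0
  then show ?case by simp
next
  case (Suc k)
  have B: "0 \<le> B" using assms(2)[of a a] by linarith
  have "\<bar>mat_pow S M (Suc k) a b\<bar> \<le> (\<Sum>d\<in>S. \<bar>mat_pow S M k a d\<bar> * \<bar>M d b\<bar>)"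
    unfolding mat_pow.simps mat_mult_def abs_mult[symmetric] by (rule sum_abs)
  also have "\<dots> \<le> (\<Sum>d\<in>S. (real (card S) * B)^k * B)"
    using Suc assms(2) B by (intro sum_mono mult_mono) auto
  finally show ?case by (simp add: mult_ac)
qed

lemma summable_norm_mat_exp_series:
  assumes "finite S" "\<And>x y. \<bar>M x y\<bar> \<le> B"
  shows "summable (\<lambda>k. norm (mat_pow S M k a b / fact k))"
  using mat_pow_abs_le[OF assms]
  by (intro summable_comparison_test[OF _ summable_exp[of "real (card S) * B"]])
     (auto simp: field_simps)

lemma sums_eq_first_if_tail_zero:
  fixes f :: "nat \<Rightarrow> real"
  assumes "f sums s" "\<And>k. k > 0 \<Longrightarrow> f k = 0"
  shows "s = f 0"
proof -
  have "f = (\<lambda>k. if k = 0 then f 0 else 0)" using assms(2) by auto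
  then show ?thesis using assms(1) sums_single[of 0 "\<lambda>_. f 0"] sums_unique2 by metis
qed

lemma alternating_binomial_sum:
  "(\<Sum>i\<le>k. (-1::real)^(k-i) * (k choose i)) = (if k = 0 then 1 else 0)"
proof -
  have "(1 + (-1::real))^k = (\<Sum>i\<le>k. of_nat (k choose i) * 1^i * (-1)^(k-i))"
    by (rule binomial_ring)
  then show ?thesis by (cases k) (simp_all add: mult_ac)
qed

lemma mat_exp_skew_orthogonal:
  assumes S: "finite S" and skew: "\<And>x y. M y x = - M x y" and bnd: "\<And>x y. \<bar>M x y\<bar> \<le> B"
    and a: "a \<in> S" and b: "b \<in> S"
  shows "(\<Sum>c\<in>S. mat_exp S M a c * mat_exp S M b c) = (if a = b then 1 else 0)"
proof -
  define P where "P = mat_pow S M"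
  define cauchy where "cauchy k = (\<Sum>c\<in>S. \<Sum>i\<le>k. P i a c / fact i * (P (k-i) b c / fact (k-i)))" for k
  have "cauchy sums (\<Sum>c\<in>S. mat_exp S M a c * mat_exp S M b c)"
    unfolding cauchy_def mat_exp_def P_def
    by (intro sums_sum Cauchy_product_sums summable_norm_mat_exp_series[OF S bnd])
  moreover have "cauchy k = (if k = 0 then 1 else 0) * P k a b" for k
    \<comment> \<open>since \<open>M\<^sup>T = -M\<close>, the \<open>k\<close>-th term is \<open>(1 - 1)\<^sup>k M\<^sup>k / k!\<close>\<close>
  proof -
    have "cauchy k = (\<Sum>i\<le>k. (\<Sum>c\<in>S. P i a c * P (k-i) b c) / (fact i * fact (k-i)))"
      unfolding cauchy_def by (subst sum.swap) (simp add: sum_divide_distrib)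
    also have "\<dots> = (\<Sum>i\<le>k. (-1)^(k-i) * (k choose i) * P k a b / fact k)"
      unfolding P_def skew_mat_pow_row_products[OF S skew a b]
      by (intro sum.cong) (auto simp: binomial_fact)
    also have "\<dots> = (\<Sum>i\<le>k. (-1::real)^(k-i) * (k choose i)) * P k a b / fact k"
      by (simp add: sum_distrib_right sum_divide_distrib)
    finally show ?thesis unfolding alternating_binomial_sum by simp
  qed
  ultimately show ?thesis using sums_eq_first_if_tail_zero[of cauchy] a by (simp add: P_def)
qed

lemma mat_exp_row_sum:
  assumes S: "finite S" and bnd: "\<And>x y. \<bar>M x y\<bar> \<le> B"
    and rows: "\<And>x. x \<in> S \<Longrightarrow> (\<Sum>y\<in>S. M x y) = 0" and a: "a \<in> S"
  shows "(\<Sum>b\<in>S. mat_exp S M a b) = 1"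
proof -
  define row where "row k = (\<Sum>b\<in>S. mat_pow S M k a b / fact k)" for k
  have "row sums (\<Sum>b\<in>S. mat_exp S M a b)"
    unfolding row_def mat_exp_def
    by (intro sums_sum summable_sums summable_norm_cancel[OF summable_norm_mat_exp_series[OF S bnd]])
  moreover have "row (Suc j) = 0" for j
  proof -
    have "(\<Sum>b\<in>S. mat_pow S M (Suc j) a b) = (\<Sum>d\<in>S. mat_pow S M j a d * (\<Sum>b\<in>S. M d b))"
      unfolding mat_pow.simps mat_mult_def sum_distrib_left by (rule sum.swap)
    then show ?thesis using rows by (simp add: row_def sum_divide_distrib[symmetric])
  qed
  moreover have "row 0 = 1" using S a by (simp add: row_def)
  ultimately show ?thesis by (metis sums_eq_first_if_tail_zero gr0_conv_Suc)
qed

lemma even_card_if_sum_signs_eq_0: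
  assumes "finite S" "\<And>x. x \<in> S \<Longrightarrow> f x = 1 \<or> f x = -1" "(\<Sum>x\<in>S. f x) = (0::int)"
  shows "even (card S)"
proof -
  have "even (\<Sum>x\<in>S. f x + 1)" using assms(2) by (intro dvd_sum) fastforce
  then have "even (int (card S))" using assms(3) by (simp add: sum.distrib)
  then show ?thesis by simp
qed

lemma flat_orthogonal_card_even_square:
  fixes U :: "'a \<Rightarrow> 'a \<Rightarrow> real"
  assumes S: "finite S" and two: "card S \<ge> 2"
    and flat: "\<And>x y. x \<in> S \<Longrightarrow> y \<in> S \<Longrightarrow> \<bar>U x y\<bar> = c"
    and orth: "\<And>a b. a \<in> S \<Longrightarrow> b \<in> S \<Longrightarrow> (\<Sum>x\<in>S. U a x * U b x) = (if a = b then 1 else 0)"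
    and row: "\<And>a. a \<in> S \<Longrightarrow> (\<Sum>x\<in>S. U a x) = 1"
  shows "even (card S) \<and> (\<exists>m::nat. card S = m ^ 2)"
proof -
  obtain a b where ab: "a \<in> S" "b \<in> S" "a \<noteq> b"
    using two card_le_Suc0_iff_eq[OF S] by fastforce
  define sg where "sg x y = (if U x y \<ge> 0 then 1 else (-1::int))" for x y
  have U_sg: "U x y = c * sg x y" if "x \<in> S" "y \<in> S" for x y
    using flat[OF that] by (auto simp: sg_def)
  have "U a x * U a x = c^2" if "x \<in> S" for x
    using abs_mult_self_eq[of "U a x"] flat[OF ab(1) that] by (simp add: power2_eq_square)
  then have norm_row: "real (card S) * c^2 = 1" using orth[OF ab(1) ab(1)] by simp
  define z where "z = (\<Sum>x\<in>S. sg a x)"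
  have "c * z = 1" using row[OF ab(1)] U_sg ab(1) by (simp add: z_def sum_distrib_left)
  then have "real (card S) = (c * z)^2 * real (card S)" by simp
  also have "\<dots> = of_int (z^2)" using norm_row by (simp add: power_mult_distrib mult_ac)
  finally have "int (card S) = z^2" by linarith
  then have square: "card S = (nat \<bar>z\<bar>)^2" by (simp add: nat_power_eq[symmetric])
  have "c^2 * of_int (\<Sum>x\<in>S. sg a x * sg b x) = (\<Sum>x\<in>S. U a x * U b x)"
    using U_sg ab by (simp add: sum_distrib_left power2_eq_square mult_ac)
  also have "\<dots> = 0" using orth ab by simp
  finally have "real_of_int (\<Sum>x\<in>S. sg a x * sg b x) = 0" using norm_row by auto
  then have "(\<Sum>x\<in>S. sg a x * sg b x) = 0" by (simp only: of_int_eq_0_iff)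
  then have "even (card S)"
    by (rule even_card_if_sum_signs_eq_0[OF S, rotated]) (simp add: sg_def)
  with square show ?thesis by blast
qed

lemma perm_mat_row_sum:
  assumes "group G" "finite (carrier G)" "g \<in> carrier G" "a \<in> carrier G"
  shows "(\<Sum>b\<in>carrier G. perm_mat G g a b) = 1"
proof -
  interpret group G by fact
  have "(\<Sum>b\<in>carrier G. perm_mat G g a b) = (\<Sum>b\<in>carrier G. if b = g \<otimes>\<^bsub>G\<^esub> a then 1 else 0)"
    unfolding perm_mat_def using inv_solve_right'[OF assms(3) _ assms(4)]
    by (intro sum.cong) auto
  then show ?thesis using assms by simp
qed

lemma perm_mat_column_sum:
  assumes "group G" "finite (carrier G)" "g \<in> carrier G" "a \<in> carrier G"
  shows "(\<Sum>b\<in>carrier G. perm_mat G g b a) = 1"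
proof -
  interpret group G by fact
  have "(\<Sum>b\<in>carrier G. perm_mat G g b a) = (\<Sum>b\<in>carrier G. if b = inv\<^bsub>G\<^esub> g \<otimes>\<^bsub>G\<^esub> a then 1 else 0)"
    unfolding perm_mat_def
    using inv_solve_right'[OF assms(3,4)] inv_solve_left[OF _ assms(3,4)]
    by (intro sum.cong) auto
  then show ?thesis using assms by simp
qed

lemma skew_adj_row_sum:
  assumes "group G" "finite (carrier G)" "C \<subseteq> carrier G" "a \<in> carrier G"
  shows "(\<Sum>b\<in>carrier G. skew_adj G C a b) = 0"
proof -
  have "(\<Sum>b\<in>carrier G. skew_adj G C a b)
      = (\<Sum>g\<in>C. \<Sum>b\<in>carrier G. perm_mat G g a b) - (\<Sum>g\<in>C. \<Sum>b\<in>carrier G. perm_mat G g b a)"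
    unfolding skew_adj_def conn_mat_def sum_subtractf by (simp add: sum.swap[of _ C])
  also have "\<dots> = 0"
    using perm_mat_row_sum[OF assms(1,2) _ assms(4)] perm_mat_column_sum[OF assms(1,2) _ assms(4)]
      assms(3) by (simp add: subset_iff)
  finally show ?thesis .
qed

lemma conn_mat_abs_le:
  assumes "finite C"
  shows "\<bar>conn_mat G C a b\<bar> \<le> real (card C)"
proof -
  have "0 \<le> conn_mat G C a b" unfolding conn_mat_def perm_mat_def by (intro sum_nonneg) auto
  moreover have "conn_mat G C a b \<le> (\<Sum>g\<in>C. 1)" unfolding conn_mat_def perm_mat_def
    by (intro sum_mono) auto
  ultimately show ?thesis by simp
qed

lemma skew_adj_abs_le: "finite C \<Longrightarrow> \<bar>skew_adj G C a b\<bar> \<le> 2 * real (card C)"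
  unfolding skew_adj_def using conn_mat_abs_le[of C G a b] conn_mat_abs_le[of C G b a] by linarith

theorem lemma10p3:
  fixes G :: "('a, 'b) monoid_scheme" and C :: "'a set"
  assumes "group G" and "finite (carrier G)" and "card (carrier G) > 2"
    and "oriented_cayley G C"
    and "\<exists>t::real. \<forall>a\<in>carrier G. \<forall>b\<in>carrier G. \<forall>c\<in>carrier G. \<forall>d\<in>carrier G.
           \<bar>transition G C t a b\<bar> = \<bar>transition G C t c d\<bar>"
  shows "even (card (carrier G)) \<and> (\<exists>m::nat. card (carrier G) = m ^ 2)"
proof -
  obtain t where flat: "\<forall>a\<in>carrier G. \<forall>b\<in>carrier G. \<forall>c\<in>carrier G. \<forall>d\<in>carrier G.
      \<bar>transition G C t a b\<bar> = \<bar>transition G C t c d\<bar>" using assms(5) by blast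
  obtain e where e: "e \<in> carrier G" using assms(3) by fastforce
  define M where "M a b = - t * skew_adj G C a b" for a b
  have U: "transition G C t = mat_exp (carrier G) M" unfolding M_def transition_def ..
  have C: "C \<subseteq> carrier G" using assms(4) unfolding oriented_cayley_def by blast
  have skew: "M y x = - M x y" for x y unfolding M_def skew_adj_def by (simp add: algebra_simps)
  have bound: "\<bar>M x y\<bar> \<le> \<bar>t\<bar> * (2 * real (card C))" for x y
    unfolding M_def abs_mult abs_minus
    using skew_adj_abs_le[OF finite_subset[OF C assms(2)]] by (intro mult_left_mono) auto
  have rows: "(\<Sum>y\<in>carrier G. M x y) = 0" if "x \<in> carrier G" for x
    unfolding M_def using skew_adj_row_sum[OF assms(1,2) C that]
    by (simp add: sum_negf sum_distrib_left[symmetric])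
  show ?thesis
  proof (rule flat_orthogonal_card_even_square[OF assms(2), of "transition G C t"])
    show "card (carrier G) \<ge> 2" using assms(3) by simp
    show "\<bar>transition G C t x y\<bar> = \<bar>transition G C t e e\<bar>"
      if "x \<in> carrier G" "y \<in> carrier G" for x y
      using flat that e by blast
    show "(\<Sum>x\<in>carrier G. transition G C t a x * transition G C t b x) = (if a = b then 1 else 0)"
      if "a \<in> carrier G" "b \<in> carrier G" for a b
      unfolding U using mat_exp_skew_orthogonal[OF assms(2) skew bound that] .
    show "(\<Sum>x\<in>carrier G. transition G C t a x) = 1" if "a \<in> carrier G" for a
      unfolding U using mat_exp_row_sum[OF assms(2) bound rows that] .
  qed
qed

end
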